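(* Let $w=w_1\cdots w_n$ be a word of length $n\ge 2$ and let $\mathrm{A}\ne\mathrm{M}$ be two letters used in $w$. Let $T=\{i\in[n]: w_i=\mathrm{A},\ w_{n-i+1}=\mathrm{M}\}$ and $t=|T|$. Then $f(w)\ge 4t$. Moreover, if $w$ uses only the letters $\mathrm{A}$ and $\mathrm{M}$, then $f(w)\ge n+t$.
   Context: A word of length $n$ is a sequence $w=w_1w_2\cdots w_n$ of letters (symbols). Let $[n]=\{1,\dots,n\}$. An $n$-grid is a function $G:[n]^2\to\Sigma$, where $\Sigma$ is an arbitrary set of letters. The $i$th row of $G$ contains $w$ if $G(i,j)=w_j$ for all $1\le j\le n$, or $G(i,j)=w_{n-j+1}$ for all $1\le j\le n$. The $j$th column contains $w$ if $G(i,j)=w_i$ for all $i$, or $G(i,j)=w_{n-i+1}$ for all $i$. The main diagonal contains $w$ if $G(i,i)=w_i$ for all $i$ or $G(i,i)=w_{n-i+1}$ for all $i$; the anti-diagonal contains $w$ if $G(i,n-i+1)=w_i$ for all $i$ or $G(i,n-i+1)=w_{n-i+1}$ for all $i$. Let $f(w,G)$ be the number of the $2n+2$ lines ($n$ rows, $n$ columns, $2$ diagonals) of $G$ that contain $w$, and $f(w)=\max_G f(w,G)$ over all $n$-grids $G$. *)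

theory Defs
  imports Main
begin

(* A word w_1...w_n is a list w of length n; letter w_i is  w ! (i - 1).
   An n-grid is a function G :: nat => nat => 'a, only its values on [n]^2 matter. *)

definition letter :: "'a list \<Rightarrow> nat \<Rightarrow> 'a" where
  "letter w i = w ! (i - 1)"

definition row_contains :: "'a list \<Rightarrow> (nat \<Rightarrow> nat \<Rightarrow> 'a) \<Rightarrow> nat \<Rightarrow> bool" where
  "row_contains w G i \<longleftrightarrow>
     (let n = length w in
       (\<forall>j\<in>{1..n}. G i j = letter w j) \<or> (\<forall>j\<in>{1..n}. G i j = letter w (n - j + 1)))"

definition col_contains :: "'a list \<Rightarrow> (nat \<Rightarrow> nat \<Rightarrow> 'a) \<Rightarrow> nat \<Rightarrow> bool" where
  "col_contains w G j \<longleftrightarrow>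
     (let n = length w in
       (\<forall>i\<in>{1..n}. G i j = letter w i) \<or> (\<forall>i\<in>{1..n}. G i j = letter w (n - i + 1)))"

definition diag_contains :: "'a list \<Rightarrow> (nat \<Rightarrow> nat \<Rightarrow> 'a) \<Rightarrow> bool" where
  "diag_contains w G \<longleftrightarrow>
     (let n = length w in
       (\<forall>i\<in>{1..n}. G i i = letter w i) \<or> (\<forall>i\<in>{1..n}. G i i = letter w (n - i + 1)))"

definition antidiag_contains :: "'a list \<Rightarrow> (nat \<Rightarrow> nat \<Rightarrow> 'a) \<Rightarrow> bool" where
  "antidiag_contains w G \<longleftrightarrow>
     (let n = length w in
       (\<forall>i\<in>{1..n}. G i (n - i + 1) = letter w i) \<or>
       (\<forall>i\<in>{1..n}. G i (n - i + 1) = letter w (n - i + 1)))"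

definition lines_count :: "'a list \<Rightarrow> (nat \<Rightarrow> nat \<Rightarrow> 'a) \<Rightarrow> nat" where
  "lines_count w G =
     card {i \<in> {1..length w}. row_contains w G i}
   + card {j \<in> {1..length w}. col_contains w G j}
   + (if diag_contains w G then 1 else 0)
   + (if antidiag_contains w G then 1 else 0)"

(* f(w) = max over all n-grids (the set of values is bounded by 2n+2, hence finite) *)
definition fmax :: "'a list \<Rightarrow> nat" where
  "fmax w = Max {lines_count w G | G. True}"

end

theory Submission
  imports Defs
begin

(* Give each index i an orientation and let row i read w forwards or backwards accordingly.
   If the orientations of a row set R and a column set C are compatible, i.e. the entry at
   (i, c) is the same whether read along row i or along column c, one grid has all lines of
   R and of C containing w.  Orienting i forwards iff w_i = A makes the indices i with
   {w_i, w_(n-i+1)} = {A, M} compatible with each other; there are 2t of them, since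
   i |-> n-i+1 swaps the two kinds.  This gives 2t rows and 2t columns.  If w uses only A
   and M, all n rows are moreover compatible with the t columns in T. *)

definition oriented :: "'a list \<Rightarrow> bool \<Rightarrow> nat \<Rightarrow> 'a" where
  "oriented w b k = (if b then letter w k else letter w (length w - k + 1))"

definition mirror_pairs :: "'a list \<Rightarrow> 'a \<Rightarrow> 'a \<Rightarrow> nat set" where
  "mirror_pairs w a b = {i \<in> {1..length w}. letter w i = a \<and> letter w (length w - i + 1) = b}"

lemma lines_count_le: "lines_count w G \<le> 2 * length w + 2"
proof -
  have "card {i \<in> {1..length w}. row_contains w G i} \<le> card {1..length w}"
    by (rule card_mono) auto
  moreover have "card {j \<in> {1..length w}. col_contains w G j} \<le> card {1..length w}"
    by (rule card_mono) auto
  ultimately show ?thesis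
    unfolding lines_count_def by simp
qed

lemma lines_count_le_fmax: "lines_count w G \<le> fmax w"
proof -
  have "{lines_count w G | G. True} \<subseteq> {..2 * length w + 2}"
    using lines_count_le by blast
  then have "finite {lines_count w G | G. True}"
    using finite_subset by blast
  then show ?thesis
    unfolding fmax_def by (rule Max_ge) auto
qed

lemma row_contains_oriented:
  assumes "\<And>j. j \<in> {1..length w} \<Longrightarrow> G i j = oriented w b j"
  shows "row_contains w G i"
  using assms unfolding row_contains_def oriented_def Let_def by (cases b) auto

lemma col_contains_oriented:
  assumes "\<And>i. i \<in> {1..length w} \<Longrightarrow> G i j = oriented w b i"
  shows "col_contains w G j"
  using assms unfolding col_contains_def oriented_def Let_def by (cases b) auto

lemma fmax_ge_card_compatible:
  assumes R: "R \<subseteq> {1..length w}" and C: "C \<subseteq> {1..length w}"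
    and compatible: "\<And>i c. i \<in> R \<Longrightarrow> c \<in> C \<Longrightarrow> oriented w (orient i) c = oriented w (orient c) i"
  shows "card R + card C \<le> fmax w"
proof -
  define G where "G i j = (if i \<in> R then oriented w (orient i) j else oriented w (orient j) i)" for i j
  have rows: "R \<subseteq> {i \<in> {1..length w}. row_contains w G i}"
    using R by (auto simp: G_def intro: row_contains_oriented)
  have cols: "C \<subseteq> {j \<in> {1..length w}. col_contains w G j}"
    using C compatible by (auto simp: G_def intro!: col_contains_oriented)
  have "card R \<le> card {i \<in> {1..length w}. row_contains w G i}"
    using card_mono[OF _ rows] by simp
  moreover have "card C \<le> card {j \<in> {1..length w}. col_contains w G j}"
    using card_mono[OF _ cols] by simp
  ultimately have "card R + card C \<le> lines_count w G"
    unfolding lines_count_def by linarith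
  then show ?thesis
    using lines_count_le_fmax[of w G] by linarith
qed

lemma mirror_pairs_subset: "mirror_pairs w a b \<subseteq> {1..length w}"
  unfolding mirror_pairs_def by auto

lemma bij_betw_mirror_pairs:
  "bij_betw (\<lambda>i. length w - i + 1) (mirror_pairs w a b) (mirror_pairs w b a)"
  by (rule bij_betw_byWitness[where f' = "\<lambda>i. length w - i + 1"])
    (auto simp: mirror_pairs_def Suc_diff_le)

lemma card_mirror_pairs_swap: "card (mirror_pairs w b a) = card (mirror_pairs w a b)"
  by (rule sym) (rule bij_betw_same_card[OF bij_betw_mirror_pairs])

lemma card_mirror_pairs_both:
  assumes "a \<noteq> b"
  shows "card (mirror_pairs w a b \<union> mirror_pairs w b a) = 2 * card (mirror_pairs w a b)"
proof -
  have "mirror_pairs w a b \<inter> mirror_pairs w b a = {}"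
    using assms unfolding mirror_pairs_def by auto
  then show ?thesis
    using card_mirror_pairs_swap[of w b a]
    by (simp add: card_Un_disjoint mirror_pairs_def)
qed

lemma mirror_pairs_compatible:
  assumes "a \<noteq> b"
    and "i \<in> mirror_pairs w a b \<union> mirror_pairs w b a"
    and "c \<in> mirror_pairs w a b \<union> mirror_pairs w b a"
  shows "oriented w (letter w i = a) c = oriented w (letter w c = a) i"
  using assms unfolding mirror_pairs_def oriented_def by auto

lemma mirror_pairs_compatible_two_letters:
  assumes "set w \<subseteq> {a, b}" and "i \<in> {1..length w}" and "c \<in> mirror_pairs w a b"
  shows "oriented w (letter w i = a) c = oriented w (letter w c = a) i"
proof -
  have "letter w i \<in> set w"
    using assms(2) unfolding letter_def by (auto intro: nth_mem)
  then have "letter w i = a \<or> letter w i = b"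
    using assms(1) by blast
  moreover have "letter w c = a" "letter w (length w - c + 1) = b"
    using assms(3) unfolding mirror_pairs_def by auto
  ultimately show ?thesis
    unfolding oriented_def by auto
qed

theorem lemma10:
  fixes w :: "'a list" and A M :: 'a
  assumes "length w \<ge> 2"
    and "A \<noteq> M" and "A \<in> set w" and "M \<in> set w"
  defines "t \<equiv> card {i \<in> {1..length w}. letter w i = A \<and> letter w (length w - i + 1) = M}"
  shows "fmax w \<ge> 4 * t \<and> (set w \<subseteq> {A, M} \<longrightarrow> fmax w \<ge> length w + t)"
proof -
  let ?o = "\<lambda>i. letter w i = A"
  let ?S = "mirror_pairs w A M \<union> mirror_pairs w M A"
  have t: "t = card (mirror_pairs w A M)"
    unfolding t_def mirror_pairs_def ..
  have S: "?S \<subseteq> {1..length w}"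
    by (intro Un_least mirror_pairs_subset)
  have "card ?S + card ?S \<le> fmax w"
    by (rule fmax_ge_card_compatible[where orient = ?o, OF S S
          mirror_pairs_compatible[OF \<open>A \<noteq> M\<close>]])
  then have "4 * t \<le> fmax w"
    using card_mirror_pairs_both[OF \<open>A \<noteq> M\<close>] t by simp
  moreover have "length w + t \<le> fmax w" if "set w \<subseteq> {A, M}"
  proof -
    have "card {1..length w} + card (mirror_pairs w A M) \<le> fmax w"
      by (rule fmax_ge_card_compatible[where orient = ?o, OF order_refl mirror_pairs_subset
            mirror_pairs_compatible_two_letters[OF that]])
    then show ?thesis
      using t by simp
  qed
  ultimately show ?thesis
    by blast
qed

end
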